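(* Let $G(\mathcal V,\mathcal E)$ be a finite simple directed graph with $|\mathcal V|\ge 2$ and let $f>0$ be an integer. Suppose that for every partition $X,Y,Z$ of $\mathcal V$ with $X,Y$ non-empty and $|Z|\le f$, either $X \Rightarrow_{\mathcal V - Z} Y$ or $Y \Rightarrow_{\mathcal V - Z} X$. Let $F\subseteq\mathcal V$ with $|F|\le f$, and let $A,B$ be a partition of $\mathcal V-F$ into non-empty sets with $A \Rightarrow_{\mathcal V - F} B$. Then: (1) if it is not the case that $B \Rightarrow_{\mathcal V - F} A$, there exists a non-empty set $S\subseteq A$ such that $S \Rightarrow_{\mathcal V - F} \mathcal V-F-S$ and $S$ is strongly connected in $G_{-F}$; (2) if $B \Rightarrow_{\mathcal V - F} A$, there exists a non-empty set $S\subseteq A\cup B$ such that $S \Rightarrow_{\mathcal V - F} \mathcal V-F-S$, $S$ is strongly connected in $G_{-F}$, and $A \Rightarrow_{\mathcal V - F} S-A$; (3) every node of $F$ has at least $f+1$ incoming neighbors in $\mathcal V-F$.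
   Context: An $(X,y)$-path is a directed path from some node of $X$ to the node $y\notin X$; it excludes $F$ if it contains no node of $F$; $(X,y)$-paths are disjoint if they pairwise share only $y$. For pairwise disjoint $X,Y,F\subseteq\mathcal V$ with $|F|\le f$, $X \Rightarrow_{\mathcal V - F} Y$ means: $Y=\emptyset$, or every $y\in Y$ has at least $f+1$ pairwise disjoint $(X,y)$-paths excluding $F$. $G_{-F}$ is the graph obtained from $G$ by deleting the nodes of $F$ and all edges incident to them. A set $S\subseteq\mathcal V-F$ is strongly connected in $G_{-F}$ if for all $i,j\in S$ there is a directed $(i,j)$-path in $G_{-F}$. A node $i$ is an incoming neighbor of $k$ if $(i,k)\in\mathcal E$. *)

theory Defs
  imports Main
begin

definition dpath :: "('a \<times> 'a) set \<Rightarrow> 'a list \<Rightarrow> 'a \<Rightarrow> 'a \<Rightarrow> bool" where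
  "dpath E p x y \<longleftrightarrow> p \<noteq> [] \<and> hd p = x \<and> last p = y \<and> distinct p \<and>
     (\<forall>i. Suc i < length p \<longrightarrow> (p ! i, p ! Suc i) \<in> E)"

definition XY_path_excl :: "('a \<times> 'a) set \<Rightarrow> 'a set \<Rightarrow> 'a \<Rightarrow> 'a set \<Rightarrow> 'a list \<Rightarrow> bool" where
  "XY_path_excl E X y F p \<longleftrightarrow> y \<notin> X \<and> (\<exists>x\<in>X. dpath E p x y) \<and> set p \<inter> F = {}"

definition reach :: "('a \<times> 'a) set \<Rightarrow> nat \<Rightarrow> 'a set \<Rightarrow> 'a set \<Rightarrow> 'a set \<Rightarrow> bool" where
  "reach E f X Y F \<longleftrightarrow> Y = {} \<or>
     (\<forall>y\<in>Y. \<exists>P. finite P \<and> card P \<ge> f + 1 \<and> (\<forall>p\<in>P. XY_path_excl E X y F p) \<and>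
        (\<forall>p\<in>P. \<forall>q\<in>P. p \<noteq> q \<longrightarrow> set p \<inter> set q = {y}))"

definition strongly_conn_minus :: "('a \<times> 'a) set \<Rightarrow> 'a set \<Rightarrow> 'a set \<Rightarrow> bool" where
  "strongly_conn_minus E F S \<longleftrightarrow>
     (\<forall>i\<in>S. \<forall>j\<in>S. \<exists>p. dpath E p i j \<and> set p \<inter> F = {})"

end

theory Submission
  imports Defs
begin

text \<open>
  Part (3): the hypothesis applied to the partition \<open>{k}, V - F, F - {k}\<close> gives
  \<open>V - F \<Rightarrow> {k}\<close>, because two disjoint paths leaving the single node \<open>k\<close> would meet at \<open>k\<close>;
  the \<open>f + 1\<close> disjoint paths into \<open>k\<close> enter it through distinct in-neighbours in \<open>V - F\<close>.

  Parts (1) and (2): call the nodes of \<open>V - F - U\<close> with an edge into \<open>U\<close> the in-boundary of \<open>U\<close>.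
  Among the nonempty subsets of a set \<open>U\<close> whose in-boundaries have at most \<open>f\<close> nodes, one
  of minimum size, \<open>S\<close>, is strongly connected (the nodes reaching a fixed node inside it form such
  a subset), and the hypothesis applied to \<open>S, V - F - S, F\<close> gives \<open>S \<Rightarrow> V - F - S\<close>:
  \<open>f + 1\<close> disjoint paths into \<open>S\<close> would need \<open>f + 1\<close> boundary nodes. For (2) take
  \<open>U = V - F\<close>, whose in-boundary is empty. For (1), some \<open>a \<in> A\<close> lacks \<open>f + 1\<close> disjoint
  paths from \<open>B\<close>, so by Menger's theorem at most \<open>f\<close> nodes separate \<open>B\<close> from the
  in-neighbours of \<open>a\<close>; the nodes reaching \<open>a\<close> around this separator form a set \<open>U \<subseteq> A\<close>
  whose in-boundary lies in the separator.
\<close>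

section \<open>Walks\<close>

abbreviation walk :: "('a \<times> 'a) set \<Rightarrow> 'a list \<Rightarrow> bool" where
  "walk E p \<equiv> successively (\<lambda>u v. (u, v) \<in> E) p"

lemma dpath_iff_walk:
  "dpath E p x y \<longleftrightarrow> p \<noteq> [] \<and> hd p = x \<and> last p = y \<and> distinct p \<and> walk E p"
  unfolding dpath_def successively_conv_nth by blast

lemma walk_mono: "walk E p \<Longrightarrow> E \<subseteq> E' \<Longrightarrow> walk E' p"
  by (erule successively_mono) auto

lemma walk_append_edge:
  "walk E p \<Longrightarrow> walk E q \<Longrightarrow> p \<noteq> [] \<Longrightarrow> q \<noteq> [] \<Longrightarrow> (last p, hd q) \<in> E \<Longrightarrow> walk E (p @ q)"
  by (auto simp: successively_append_iff)

lemma walk_join: "walk E (xs @ [v]) \<Longrightarrow> walk E (v # ys) \<Longrightarrow> walk E (xs @ v # ys)"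
  by (cases ys) (auto simp: successively_append_iff successively_Cons)

lemma walk_shortcut:
  assumes "walk E w" "w \<noteq> []"
  shows "\<exists>p. p \<noteq> [] \<and> distinct p \<and> walk E p \<and> hd p = hd w \<and> last p = last w \<and> set p \<subseteq> set w"
  using assms
proof (induction "length w" arbitrary: w rule: less_induct)
  case less
  show ?case
  proof (cases "distinct w")
    case False
    then obtain xs ys zs y where w: "w = xs @ [y] @ ys @ [y] @ zs"
      using not_distinct_decomp by blast
    let ?w = "xs @ [y] @ zs"
    have "walk E ?w" using less.prems(1) unfolding w
      by (auto simp: successively_append_iff successively_Cons)
    then obtain p where "p \<noteq> [] \<and> distinct p \<and> walk E p \<and> hd p = hd ?w \<and> last p = last ?w \<and> set p \<subseteq> set ?w"
      using less.hyps[of ?w] w by auto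
    moreover have "hd ?w = hd w" "last ?w = last w" "set ?w \<subseteq> set w"
      using w by (cases xs; cases zs; auto)+
    ultimately show ?thesis by auto
  qed (use less.prems in blast)
qed

lemma rtrancl_imp_path:
  assumes "(u, v) \<in> E\<^sup>*"
  shows "\<exists>p. p \<noteq> [] \<and> distinct p \<and> walk E p \<and> hd p = u \<and> last p = v \<and> set p \<subseteq> insert u (Range E)"
proof -
  have "\<exists>w. w \<noteq> [] \<and> walk E w \<and> hd w = u \<and> last w = v \<and> set w \<subseteq> insert u (Range E)"
    using assms
  proof (induction rule: rtrancl_induct)
    case (step w v)
    then obtain p where "p \<noteq> [] \<and> walk E p \<and> hd p = u \<and> last p = w \<and> set p \<subseteq> insert u (Range E)"
      by blast
    with step.hyps(2) show ?case
      by (intro exI[of _ "p @ [v]"]) (auto simp: successively_append_iff)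
  qed (intro exI[of _ "[u]"], auto)
  then show ?thesis using walk_shortcut by fastforce
qed

lemma walk_enters:
  "walk E p \<Longrightarrow> p \<noteq> [] \<Longrightarrow> hd p \<notin> D \<Longrightarrow> last p \<in> D \<Longrightarrow> \<exists>c\<in>set p. c \<notin> D \<and> (\<exists>w\<in>D. (c, w) \<in> E)"
proof (induction p)
  case (Cons a p)
  show ?case
  proof (cases "p = [] \<or> hd p \<in> D")
    case True
    then show ?thesis using Cons.prems by (auto simp: successively_Cons)
  next
    case False
    then show ?thesis using Cons.prems Cons.IH by (auto simp: successively_Cons)
  qed
qed simp

section \<open>Menger's theorem\<close>

definition AB_path :: "('a \<times> 'a) set \<Rightarrow> 'a set \<Rightarrow> 'a set \<Rightarrow> 'a set \<Rightarrow> 'a list \<Rightarrow> bool" where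
  "AB_path E W A B p \<longleftrightarrow> p \<noteq> [] \<and> distinct p \<and> set p \<subseteq> W \<and> walk E p \<and> hd p \<in> A \<and> last p \<in> B"

definition separates :: "('a \<times> 'a) set \<Rightarrow> 'a set \<Rightarrow> 'a set \<Rightarrow> 'a set \<Rightarrow> 'a set \<Rightarrow> bool" where
  "separates E W A B S \<longleftrightarrow> (\<forall>p. AB_path E W A B p \<longrightarrow> set p \<inter> S \<noteq> {})"

definition disjoint_paths :: "'a list set \<Rightarrow> bool" where
  "disjoint_paths P \<longleftrightarrow> pairwise (\<lambda>p q. set p \<inter> set q = {}) P"

lemma AB_path_mono: "AB_path E W A B p \<Longrightarrow> E \<subseteq> E' \<Longrightarrow> AB_path E' W A B p"
  unfolding AB_path_def using walk_mono by blast

lemma separates_walk: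
  assumes "separates E W A B S" "w \<noteq> []" "walk E w" "set w \<subseteq> W" "hd w \<in> A" "last w \<in> B"
  shows "set w \<inter> S \<noteq> {}"
proof -
  obtain p where p: "p \<noteq> [] \<and> distinct p \<and> walk E p \<and> hd p = hd w \<and> last p = last w \<and> set p \<subseteq> set w"
    using walk_shortcut assms(2,3) by blast
  then have "AB_path E W A B p" using assms unfolding AB_path_def by auto
  then show ?thesis using assms(1) p unfolding separates_def by blast
qed

lemma AB_path_prefix:
  assumes "AB_path E W A B (p1 @ v # p2)" "v \<in> B'"
  shows "AB_path E W A B' (p1 @ [v])"
proof -
  have "walk E ((p1 @ [v]) @ p2)" using assms(1) unfolding AB_path_def by simp
  then have "walk E (p1 @ [v])" by (simp add: successively_append_iff)
  with assms show ?thesis by (cases p1) (auto simp: AB_path_def)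
qed

lemma AB_path_suffix:
  assumes "AB_path E W A B (p1 @ v # p2)" "v \<in> A'"
  shows "AB_path E W A' B (v # p2)"
  using assms by (auto simp: AB_path_def successively_append_iff)

lemma AB_path_append:
  assumes "AB_path E W A M p" "AB_path E W M' B q" "(last p, hd q) \<in> E" "set p \<inter> set q = {}"
  shows "AB_path E W A B (p @ q)"
  using assms by (auto simp: AB_path_def walk_append_edge)

lemma AB_path_join:
  assumes p: "AB_path E W A M p" and q: "AB_path E W M' B q" and "last p = hd q"
    and "set (butlast p) \<inter> set q = {}"
  shows "AB_path E W A B (butlast p @ q)"
proof -
  have "p = butlast p @ [hd q]" "q = hd q # tl q"
    using p q \<open>last p = hd q\<close> unfolding AB_path_def by (metis append_butlast_last_id list.collapse)+
  then have "walk E (butlast p @ q)"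
    using p q walk_join[of E "butlast p" "hd q" "tl q"] unfolding AB_path_def by metis
  moreover have "hd (butlast p @ q) \<in> A" using p q \<open>p = butlast p @ [hd q]\<close> unfolding AB_path_def
    by (cases "butlast p") auto
  ultimately show ?thesis using assms unfolding AB_path_def
    by (auto simp: distinct_butlast dest: in_set_butlastD)
qed

lemma walk_Diff_out_edge: "walk E p \<Longrightarrow> x \<notin> set (butlast p) \<Longrightarrow> walk (E - {(x, z)}) p"
  by (induction p) (auto simp: successively_Cons split: if_splits)

lemma walk_Diff_in_edge: "walk E p \<Longrightarrow> y \<notin> set (tl p) \<Longrightarrow> walk (E - {(z, y)}) p"
proof (induction p)
  case (Cons a p)
  then show ?case by (cases p) (auto simp: successively_Cons)
qed simp

lemma AB_path_Diff_edge:
  shows "AB_path E W A B p \<Longrightarrow> x \<notin> set (butlast p) \<Longrightarrow> AB_path (E - {(x, y)}) W A B p"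
    and "AB_path E W A B p \<Longrightarrow> y \<notin> set (tl p) \<Longrightarrow> AB_path (E - {(x, y)}) W A B p"
  using walk_Diff_out_edge[of E p x y] walk_Diff_in_edge[of E p y x] by (auto simp: AB_path_def)

lemma separates_insert_edge_end:
  assumes "separates (E - {(x, y)}) W A B S"
  shows "separates E W A B (insert x S)" and "separates E W A B (insert y S)"
  unfolding separates_def
proof (safe del: notI)
  fix p assume p: "AB_path E W A B p"
  show "set p \<inter> insert x S \<noteq> {}"
  proof (cases "x \<in> set p")
    case False
    then have "AB_path (E - {(x, y)}) W A B p"
      using AB_path_Diff_edge(1)[OF p, of x y] by (meson in_set_butlastD)
    then show ?thesis using assms unfolding separates_def by blast
  qed auto
  show "set p \<inter> insert y S \<noteq> {}"
  proof (cases "y \<in> set p")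
    case False
    then have "AB_path (E - {(x, y)}) W A B p"
      using AB_path_Diff_edge(2)[OF p, of y x] by (cases p) auto
    then show ?thesis using assms unfolding separates_def by blast
  qed auto
qed

lemma separates_via_tail:
  assumes S: "separates (E - {(x, y)}) W A B S"
    and T: "separates (E - {(x, y)}) W A (insert x S) T"
  shows "separates E W A B T"
  unfolding separates_def
proof (intro allI impI)
  fix p assume p: "AB_path E W A B p"
  obtain p1 v p2 where pp: "p = p1 @ v # p2" and v: "v \<in> insert x S" and "x \<notin> set p1"
  proof (cases "x \<in> set p")
    case True
    then obtain p1 p2 where "p = p1 @ x # p2" by (meson split_list)
    moreover have "x \<notin> set p1" using p calculation unfolding AB_path_def by auto
    ultimately show ?thesis using that by blast
  next
    case False
    then have "AB_path (E - {(x, y)}) W A B p"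
      using AB_path_Diff_edge(1)[OF p, of x y] by (meson in_set_butlastD)
    then obtain s where "s \<in> set p" "s \<in> S" using S unfolding separates_def by blast
    then obtain p1 p2 where "p = p1 @ s # p2" by (meson split_list)
    then show ?thesis using that False \<open>s \<in> S\<close> by auto
  qed
  then have "AB_path (E - {(x, y)}) W A (insert x S) (p1 @ [v])"
    using AB_path_Diff_edge(1)[OF AB_path_prefix[OF p[unfolded pp] v]] by simp
  then have "set (p1 @ [v]) \<inter> T \<noteq> {}" using T unfolding separates_def by blast
  then show "set p \<inter> T \<noteq> {}" using pp by auto
qed

lemma separates_via_head:
  assumes S: "separates (E - {(x, y)}) W A B S"
    and T: "separates (E - {(x, y)}) W (insert y S) B T"
  shows "separates E W A B T"
  unfolding separates_def
proof (intro allI impI)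
  fix p assume p: "AB_path E W A B p"
  obtain p1 v p2 where pp: "p = p1 @ v # p2" and v: "v \<in> insert y S" and "y \<notin> set p2"
  proof (cases "y \<in> set p")
    case True
    then obtain p1 p2 where "p = p1 @ y # p2" by (meson split_list)
    moreover have "y \<notin> set p2" using p calculation unfolding AB_path_def by auto
    ultimately show ?thesis using that by blast
  next
    case False
    then have "AB_path (E - {(x, y)}) W A B p"
      using AB_path_Diff_edge(2)[OF p, of y x] by (cases p) auto
    then obtain s where "s \<in> set p" "s \<in> S" using S unfolding separates_def by blast
    then obtain p1 p2 where "p = p1 @ s # p2" by (meson split_list)
    then show ?thesis using that False \<open>s \<in> S\<close> by auto
  qed
  then have "AB_path (E - {(x, y)}) W (insert y S) B (v # p2)"
    using AB_path_Diff_edge(2)[OF AB_path_suffix[OF p[unfolded pp] v]] by simp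
  then have "set (v # p2) \<inter> T \<noteq> {}" using T unfolding separates_def by blast
  then show "set p \<inter> T \<noteq> {}" using pp by auto
qed

lemma distinct_last_in_prefix:
  "distinct (p1 @ v # p2) \<Longrightarrow> last (p1 @ v # p2) \<in> set (p1 @ [v]) \<Longrightarrow> p2 = []"
  by (cases p2 rule: rev_cases) auto

lemma distinct_hd_in_suffix:
  "distinct (q1 @ v # q2) \<Longrightarrow> hd (q1 @ v # q2) \<in> set (v # q2) \<Longrightarrow> q1 = []"
  by (cases q1) auto

lemma disjoint_paths_image:
  assumes "\<And>s. s \<in> I \<Longrightarrow> g s \<noteq> []"
    and disj: "\<And>s t. s \<in> I \<Longrightarrow> t \<in> I \<Longrightarrow> s \<noteq> t \<Longrightarrow> set (g s) \<inter> set (g t) = {}"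
  shows "inj_on g I" and "disjoint_paths (g ` I)"
proof -
  show "inj_on g I"
  proof (rule inj_onI)
    fix s t assume "s \<in> I" "t \<in> I" "g s = g t"
    then show "s = t" using assms(1)[of s] disj[of s t] by auto
  qed
  show "disjoint_paths (g ` I)"
    unfolding disjoint_paths_def pairwise_def
  proof (intro ballI impI)
    fix p q assume "p \<in> g ` I" "q \<in> g ` I" "p \<noteq> q"
    then obtain s t where "s \<in> I" "t \<in> I" "p = g s" "q = g t" by blast
    then show "set p \<inter> set q = {}" using disj \<open>p \<noteq> q\<close> by blast
  qed
qed

lemma disjoint_paths_endpoints:
  assumes "finite S" "card P = card S" "disjoint_paths P"
    and e: "\<And>p. p \<in> P \<Longrightarrow> e p \<in> set p \<and> e p \<in> S"
  shows "bij_betw e P S" and "p \<in> P \<Longrightarrow> set p \<inter> S = {e p}"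
proof -
  have meet: "p = p'" if "p \<in> P" "p' \<in> P" "v \<in> set p" "v \<in> set p'" for p p' v
    using assms(3) that unfolding disjoint_paths_def pairwise_def by blast
  have inj: "inj_on e P"
  proof (rule inj_onI)
    fix p p' assume "p \<in> P" "p' \<in> P" "e p = e p'"
    then show "p = p'" using e[of p] e[of p'] meet[of p p' "e p"] by simp
  qed
  moreover have "e ` P = S"
    using e assms(1,2) card_image[OF inj] by (intro card_subset_eq) auto
  ultimately show bij: "bij_betw e P S" unfolding bij_betw_def by blast
  show "set p \<inter> S = {e p}" if "p \<in> P"
  proof -
    have "s = e p" if "s \<in> set p" "s \<in> S" for s
      using \<open>e ` P = S\<close> e meet \<open>p \<in> P\<close> that by (metis imageE)
    then show ?thesis using e that by blast
  qed
qed

text \<open>Gluing step of Menger's theorem: the linkages \<open>P1\<close> and \<open>P2\<close> of \<open>G - (x, y)\<close> are joined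
  along \<open>S\<close> and through the edge \<open>(x, y)\<close>.\<close>

context
  fixes E E' :: "('a \<times> 'a) set" and W A B S :: "'a set" and x y :: 'a and P1 P2 :: "'a list set"
  assumes sep: "separates E' W A B S" and E': "E' \<subseteq> E" and edge: "(x, y) \<in> E"
    and xS: "x \<notin> S" and yS: "y \<notin> S" and finS: "finite S"
    and P1: "card P1 = card (insert x S)" "\<forall>p\<in>P1. AB_path E' W A (insert x S) p" "disjoint_paths P1"
    and P2: "card P2 = card (insert y S)" "\<forall>q\<in>P2. AB_path E' W (insert y S) B q" "disjoint_paths P2"
begin

lemma linkage_ends:
  shows "bij_betw last P1 (insert x S)" "p \<in> P1 \<Longrightarrow> set p \<inter> insert x S = {last p}"
    and "bij_betw hd P2 (insert y S)" "q \<in> P2 \<Longrightarrow> set q \<inter> insert y S = {hd q}"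
  using disjoint_paths_endpoints[of "insert x S" P1 last] disjoint_paths_endpoints[of "insert y S" P2 hd]
    P1 P2 finS unfolding AB_path_def by auto

lemma linkages_meet_in_S:
  assumes p: "p \<in> P1" and q: "q \<in> P2" and v: "v \<in> set p" "v \<in> set q"
  shows "v \<in> S \<and> v = last p \<and> v = hd q"
proof -
  obtain p1 p2 where pp: "p = p1 @ v # p2" using v by (meson split_list)
  obtain q1 q2 where qq: "q = q1 @ v # q2" using v by (meson split_list)
  have ap: "AB_path E' W A (insert x S) p" and aq: "AB_path E' W (insert y S) B q"
    using P1 P2 p q by auto
  have "distinct p" "distinct q" using ap aq unfolding AB_path_def by auto
  have pre: "s = v \<and> v = last p" if "s \<in> set (p1 @ [v])" "s \<in> S" for s
  proof -
    have "s \<in> set p" using that pp by auto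
    then have "s = last p" using linkage_ends(2)[OF p] that(2) by blast
    moreover have "distinct (p1 @ v # p2)" using \<open>distinct p\<close> pp by simp
    ultimately have "p2 = []" using distinct_last_in_prefix that(1) pp by metis
    then show ?thesis using \<open>s = last p\<close> pp that(1) by simp
  qed
  have suf: "s = v \<and> v = hd q" if "s \<in> set (v # q2)" "s \<in> S" for s
  proof -
    have "s \<in> set q" using that qq by auto
    then have "s = hd q" using linkage_ends(4)[OF q] that(2) by blast
    moreover have "distinct (q1 @ v # q2)" using \<open>distinct q\<close> qq by simp
    ultimately have "q1 = []" using distinct_hd_in_suffix that(1) qq by metis
    then show ?thesis using \<open>s = hd q\<close> qq that(1) by simp
  qed
  have "walk E' (p1 @ [v])" "walk E' (v # q2)"
    using AB_path_prefix[OF ap[unfolded pp] singletonI] AB_path_suffix[OF aq[unfolded qq] singletonI]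
    unfolding AB_path_def by auto
  then have walk: "walk E' (p1 @ v # q2)" by (rule walk_join)
  have "hd (p1 @ v # q2) = hd p" "last (p1 @ v # q2) = last q" using pp qq by (cases p1; simp)+
  moreover have "set (p1 @ v # q2) \<subseteq> W" using ap aq pp qq unfolding AB_path_def by auto
  ultimately have "set (p1 @ v # q2) \<inter> S \<noteq> {}"
    using separates_walk[OF sep _ walk] ap aq unfolding AB_path_def by simp
  then obtain s where "s \<in> set (p1 @ [v]) \<or> s \<in> set (v # q2)" "s \<in> S" by auto
  then have "v \<in> S" using pre suf by blast
  then show ?thesis using linkage_ends(2)[OF p] linkage_ends(4)[OF q] v by blast
qed

lemma linkages_join:
  assumes "p \<in> P1" "q \<in> P2" "last p = hd q"
  shows "AB_path E W A B (butlast p @ q)"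
proof -
  have ap: "AB_path E' W A (insert x S) p" and aq: "AB_path E' W (insert y S) B q"
    using assms P1 P2 by auto
  have "set (butlast p) \<inter> set q = {}"
  proof (rule ccontr)
    assume "set (butlast p) \<inter> set q \<noteq> {}"
    then obtain v where v: "v \<in> set (butlast p)" "v \<in> set q" by blast
    then have "v = last p" using linkages_meet_in_S[OF assms(1,2)] by (auto dest: in_set_butlastD)
    moreover have "last p \<notin> set (butlast p)"
      using ap unfolding AB_path_def by (metis append_butlast_last_id distinct_append not_distinct_conv_prefix)
    ultimately show False using v by simp
  qed
  then show ?thesis using AB_path_join[OF ap aq assms(3)] AB_path_mono E' by blast
qed

lemma linkages_append_edge:
  assumes "p \<in> P1" "q \<in> P2" "last p = x" "hd q = y"
  shows "AB_path E W A B (p @ q)"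
proof -
  have ap: "AB_path E W A (insert x S) p" and aq: "AB_path E W (insert y S) B q"
    using assms P1 P2 AB_path_mono E' by blast+
  have "set p \<inter> set q = {}" using linkages_meet_in_S[OF assms(1,2)] assms(3) xS by blast
  then show ?thesis using AB_path_append[OF ap aq] edge assms(3,4) by simp
qed

lemma linkages_cross_disjoint:
  assumes "p \<in> P1" "p' \<in> P1" "q \<in> P2" "q' \<in> P2" "p \<noteq> p'" "q \<noteq> q'"
    and "last p \<noteq> hd q'" "last p' \<noteq> hd q"
  shows "(set p \<union> set q) \<inter> (set p' \<union> set q') = {}"
proof -
  have "set p \<inter> set p' = {}" "set q \<inter> set q' = {}"
    using assms(1-6) P1(3) P2(3) unfolding disjoint_paths_def pairwise_def by blast+
  moreover have "set p \<inter> set q' = {}" "set p' \<inter> set q = {}"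
    using linkages_meet_in_S[OF assms(1,4)] linkages_meet_in_S[OF assms(2,3)] assms(7,8) by blast+
  ultimately show ?thesis by blast
qed

lemma rerouted_linkage:
  "\<exists>P. finite P \<and> card P = card (insert x S) \<and> (\<forall>p\<in>P. AB_path E W A B p) \<and> disjoint_paths P"
proof -
  obtain pp where pp: "\<And>s. s \<in> insert x S \<Longrightarrow> pp s \<in> P1 \<and> last (pp s) = s"
    using linkage_ends(1) unfolding bij_betw_def by (metis f_inv_into_f inv_into_into)
  obtain qq where qq: "\<And>s. s \<in> insert y S \<Longrightarrow> qq s \<in> P2 \<and> hd (qq s) = s"
    using linkage_ends(3) unfolding bij_betw_def by (metis f_inv_into_f inv_into_into)
  define \<sigma> where "\<sigma> s = (if s = x then y else s)" for s
  have \<sigma>: "\<sigma> s \<in> insert y S" if "s \<in> insert x S" for s using that unfolding \<sigma>_def by auto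
  have \<sigma>_ne: "s \<noteq> \<sigma> t" if "s \<in> insert x S" "t \<in> insert x S" "s \<noteq> t" for s t
    using that yS unfolding \<sigma>_def by auto
  define g where "g s = (if s = x then pp x @ qq y else butlast (pp s) @ qq s)" for s
  have g_set: "set (g s) \<subseteq> set (pp s) \<union> set (qq (\<sigma> s))" for s
    unfolding g_def \<sigma>_def by (auto dest: in_set_butlastD)
  have g_path: "AB_path E W A B (g s)" if s: "s \<in> insert x S" for s
  proof (cases "s = x")
    case True
    then have "g s = pp x @ qq y" unfolding g_def by simp
    moreover have "pp x \<in> P1" "last (pp x) = x" "qq y \<in> P2" "hd (qq y) = y"
      using pp[of x] qq[of y] by simp_all
    ultimately show ?thesis using linkages_append_edge by simp
  next
    case False
    then have "g s = butlast (pp s) @ qq s" unfolding g_def by simp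
    moreover have "pp s \<in> P1" "qq s \<in> P2" "last (pp s) = hd (qq s)"
      using pp[OF s] qq[of s] s False by simp_all
    ultimately show ?thesis using linkages_join by simp
  qed
  have g_disj: "set (g s) \<inter> set (g t) = {}" if st: "s \<in> insert x S" "t \<in> insert x S" "s \<noteq> t" for s t
  proof -
    have mem: "pp s \<in> P1" "pp t \<in> P1" "qq (\<sigma> s) \<in> P2" "qq (\<sigma> t) \<in> P2"
      and ends: "last (pp s) = s" "last (pp t) = t" "hd (qq (\<sigma> s)) = \<sigma> s" "hd (qq (\<sigma> t)) = \<sigma> t"
      using pp[OF st(1)] pp[OF st(2)] qq[OF \<sigma>[OF st(1)]] qq[OF \<sigma>[OF st(2)]] by simp_all
    have "pp s \<noteq> pp t" using ends st(3) by metis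
    moreover have "qq (\<sigma> s) \<noteq> qq (\<sigma> t)" using ends \<sigma>_ne[OF st] \<sigma>_ne[OF st(2,1)] st(3) unfolding \<sigma>_def by metis
    moreover have "last (pp s) \<noteq> hd (qq (\<sigma> t))" "last (pp t) \<noteq> hd (qq (\<sigma> s))"
      using ends \<sigma>_ne[OF st] \<sigma>_ne[OF st(2,1)] st(3) by simp_all
    ultimately have "(set (pp s) \<union> set (qq (\<sigma> s))) \<inter> (set (pp t) \<union> set (qq (\<sigma> t))) = {}"
      using linkages_cross_disjoint[OF mem(1,2,3,4)] by blast
    then show ?thesis using g_set[of s] g_set[of t] by blast
  qed
  have "g s \<noteq> []" if "s \<in> insert x S" for s using g_path[OF that] unfolding AB_path_def by simp
  note g_image = disjoint_paths_image[of "insert x S" g, OF this g_disj]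
  have "\<forall>p\<in>g ` insert x S. AB_path E W A B p" using g_path by blast
  moreover have "finite (g ` insert x S)" using finS by simp
  ultimately show ?thesis using card_image[OF g_image(1)] g_image(2) by blast
qed

end

lemma menger_edgeless:
  assumes "finite W" "\<And>T. finite T \<Longrightarrow> separates {} W A B T \<Longrightarrow> k \<le> card T"
  shows "\<exists>P. finite P \<and> card P = k \<and> (\<forall>p\<in>P. AB_path E W A B p) \<and> disjoint_paths P"
proof -
  have "separates {} W A B (A \<inter> B \<inter> W)"
    unfolding separates_def
  proof (intro allI impI)
    fix p assume p: "AB_path {} W A B p"
    then obtain v p' where "p = v # p'" unfolding AB_path_def by (cases p) auto
    moreover have "p' = []"
      using p calculation unfolding AB_path_def by (cases p') (auto simp: successively_Cons)
    ultimately show "set p \<inter> (A \<inter> B \<inter> W) \<noteq> {}" using p unfolding AB_path_def by auto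
  qed
  then have "k \<le> card (A \<inter> B \<inter> W)" using assms by simp
  then obtain T where T: "T \<subseteq> A \<inter> B \<inter> W" "card T = k" by (meson obtain_subset_with_card_n)
  have "finite T" using T(1) assms(1) finite_subset by blast
  moreover have singletons: "inj_on (\<lambda>v. [v]) T" "disjoint_paths ((\<lambda>v. [v]) ` T)"
    by (rule disjoint_paths_image; simp)+
  moreover have "\<forall>p\<in>(\<lambda>v. [v]) ` T. AB_path E W A B p" using T(1) unfolding AB_path_def by auto
  ultimately show ?thesis
    using T(2) card_image[OF singletons(1)] by (intro exI[of _ "(\<lambda>v. [v]) ` T"]) simp
qed

text \<open>Induction on the number of edges: if deleting \<open>(x, y)\<close> creates a separator \<open>S\<close> with
  fewer than \<open>k\<close> vertices, then \<open>insert x S\<close> and \<open>insert y S\<close> are minimum separators in \<open>G\<close>,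
  and the linkages towards and from them in \<open>G - (x, y)\<close> are glued.\<close>

theorem menger:
  assumes "finite W" "E \<subseteq> W \<times> W" "\<And>T. finite T \<Longrightarrow> separates E W A B T \<Longrightarrow> k \<le> card T"
  shows "\<exists>P. finite P \<and> card P = k \<and> (\<forall>p\<in>P. AB_path E W A B p) \<and> disjoint_paths P"
  using assms
proof (induction "card E" arbitrary: E A B rule: less_induct)
  case less
  show ?case
  proof (cases "E = {}")
    case True
    then show ?thesis using menger_edgeless[OF less.prems(1) less.prems(3)[unfolded True]] by blast
  next
    case False
    then obtain x y where edge: "(x, y) \<in> E" by auto
    let ?E = "E - {(x, y)}"
    have "finite E" using less.prems(1,2) finite_subset by blast
    then have smaller: "card ?E < card E" using edge by (meson card_Diff1_less)
    have IH: "\<exists>P. finite P \<and> card P = k \<and> (\<forall>p\<in>P. AB_path ?E W A' B' p) \<and> disjoint_paths P"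
      if "\<And>T. finite T \<Longrightarrow> separates ?E W A' B' T \<Longrightarrow> k \<le> card T" for A' B'
      using less.hyps[OF smaller less.prems(1) _ that] less.prems(2) by blast
    show ?thesis
    proof (cases "\<forall>T. finite T \<longrightarrow> separates ?E W A B T \<longrightarrow> k \<le> card T")
      case True
      then show ?thesis using IH[of A B] AB_path_mono[of ?E W A B _ E] by blast
    next
      case False
      then obtain S where S: "finite S" "separates ?E W A B S" "card S < k" by auto
      have k: "k \<le> card (insert x S)" "k \<le> card (insert y S)"
        using separates_insert_edge_end[OF S(2)] S(1) less.prems(3) by simp_all
      then have "x \<notin> S" "y \<notin> S" using S(3) by (auto simp: insert_absorb)
      then have card: "card (insert x S) = k" "card (insert y S) = k" using k S by simp_all
      obtain P1 where "finite P1" "card P1 = k" "\<forall>p\<in>P1. AB_path ?E W A (insert x S) p" "disjoint_paths P1"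
        using IH separates_via_tail[OF S(2)] less.prems(3) by blast
      moreover obtain P2 where "finite P2" "card P2 = k" "\<forall>q\<in>P2. AB_path ?E W (insert y S) B q" "disjoint_paths P2"
        using IH separates_via_head[OF S(2)] less.prems(3) by blast
      ultimately show ?thesis
        using rerouted_linkage[OF S(2) _ edge \<open>x \<notin> S\<close> \<open>y \<notin> S\<close> S(1)] card by auto
    qed
  qed
qed

section \<open>Reachability by disjoint paths\<close>

lemma reachD:
  assumes "reach E f X Y Z" "y \<in> Y"
  obtains P where "finite P" "f + 1 \<le> card P" "\<forall>p\<in>P. XY_path_excl E X y Z p"
    "\<forall>p\<in>P. \<forall>q\<in>P. p \<noteq> q \<longrightarrow> set p \<inter> set q = {y}"
  using assms(1)[unfolded reach_def] assms(2) that by blast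

lemma XY_path_exclD:
  "XY_path_excl E X y Z p \<Longrightarrow> p \<noteq> [] \<and> hd p \<in> X \<and> last p = y \<and> distinct p \<and> walk E p \<and> set p \<inter> Z = {}"
  unfolding XY_path_excl_def dpath_iff_walk by blast

lemma not_reach_from_singleton:
  assumes "0 < f" "y \<in> Y" "k \<notin> Y"
  shows "\<not> reach E f {k} Y Z"
proof
  assume "reach E f {k} Y Z"
  then obtain P where P: "finite P" "f + 1 \<le> card P"
    "\<forall>p\<in>P. XY_path_excl E {k} y Z p" "\<forall>p\<in>P. \<forall>q\<in>P. p \<noteq> q \<longrightarrow> set p \<inter> set q = {y}"
    using assms(2) by (rule reachD)
  have "\<not> card P \<le> Suc 0" using P(2) assms(1) by simp
  then obtain p q where pq: "p \<in> P" "q \<in> P" "p \<noteq> q" by (meson card_le_Suc0_iff_eq[OF P(1)])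
  have "k \<in> set r" if "r \<in> P" for r
  proof -
    have "r \<noteq> []" "hd r = k" using XY_path_exclD[of E "{k}" y Z r] P(3) that by auto
    then show ?thesis by (metis hd_in_set)
  qed
  then have "k \<in> set p \<inter> set q" using pq by simp
  then have "k = y" using P(4) pq by simp
  then show False using assms(2,3) by simp
qed

lemma reach_iff_reach_singletons: "reach E f X Y Z \<longleftrightarrow> (\<forall>y\<in>Y. reach E f X {y} Z)"
  unfolding reach_def by auto

lemma reach_subset_target:
  assumes "reach E f X Y Z" "Y' \<subseteq> Y"
  shows "reach E f X Y' Z"
proof (rule reach_iff_reach_singletons[THEN iffD2])
  show "\<forall>y\<in>Y'. reach E f X {y} Z"
    using reach_iff_reach_singletons[THEN iffD1, OF assms(1)] assms(2) by blast
qed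

definition in_boundary :: "('a \<times> 'a) set \<Rightarrow> 'a set \<Rightarrow> 'a set \<Rightarrow> 'a set" where
  "in_boundary E W D = {x \<in> W - D. \<exists>u\<in>D. (x, u) \<in> E}"

lemma reach_imp_card_in_boundary:
  assumes "finite V" "E \<subseteq> V \<times> V" "reach E f X D Z" "u \<in> D" "X \<inter> D = {}"
  shows "f + 1 \<le> card (in_boundary E (V - Z) D)"
proof -
  obtain P where P: "finite P" "f + 1 \<le> card P"
    "\<forall>p\<in>P. XY_path_excl E X u Z p" "\<forall>p\<in>P. \<forall>q\<in>P. p \<noteq> q \<longrightarrow> set p \<inter> set q = {u}"
    using assms(3,4) by (rule reachD)
  have "\<exists>c. c \<in> set p \<and> c \<noteq> u \<and> c \<in> in_boundary E (V - Z) D" if "p \<in> P" for p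
  proof -
    have p: "p \<noteq> []" "hd p \<in> X" "last p = u" "walk E p" "set p \<inter> Z = {}"
      using XY_path_exclD[of E X u Z p] P(3) that by auto
    have "hd p \<notin> D" "last p \<in> D" using p(2,3) assms(4,5) by auto
    then obtain c w where c: "c \<in> set p" "c \<notin> D" "w \<in> D" "(c, w) \<in> E"
      using walk_enters[OF p(4,1)] by blast
    then have "c \<in> V" "c \<notin> Z" using assms(2) p(5) by auto
    then have "c \<in> in_boundary E (V - Z) D" using c unfolding in_boundary_def by auto
    moreover have "c \<noteq> u" using c(2) assms(4) by auto
    ultimately show ?thesis using c(1) by blast
  qed
  then obtain g where g: "\<And>p. p \<in> P \<Longrightarrow> g p \<in> set p \<and> g p \<noteq> u \<and> g p \<in> in_boundary E (V - Z) D"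
    by metis
  have "inj_on g P"
  proof (rule inj_onI)
    fix p q assume pq: "p \<in> P" "q \<in> P" "g p = g q"
    show "p = q"
    proof (rule ccontr)
      assume "p \<noteq> q"
      then have "set p \<inter> set q = {u}" using P(4) pq(1,2) by simp
      moreover have "g p \<in> set p \<inter> set q" using g[OF pq(1)] g[OF pq(2)] pq(3) by simp
      ultimately show False using g[OF pq(1)] by simp
    qed
  qed
  moreover have "finite (in_boundary E (V - Z) D)" using assms(1) unfolding in_boundary_def by simp
  ultimately have "card P \<le> card (in_boundary E (V - Z) D)"
    using g by (intro card_inj_on_le) auto
  then show ?thesis using P(2) by simp
qed

lemma in_boundary_ancestors:
  "in_boundary E W {w \<in> D. (w, u) \<in> (E \<inter> D \<times> D)\<^sup>*} \<subseteq> in_boundary E W D"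
  unfolding in_boundary_def by (auto intro: converse_rtrancl_into_rtrancl)

lemma strongly_conn_minus_if_minimal:
  assumes "finite W" "D \<inter> F = {}" "card (in_boundary E W D) \<le> f"
    and minimal: "\<And>D'. D' \<subset> D \<Longrightarrow> D' \<noteq> {} \<Longrightarrow> f < card (in_boundary E W D')"
  shows "strongly_conn_minus E F D"
  unfolding strongly_conn_minus_def
proof (intro ballI)
  fix i j assume "i \<in> D" "j \<in> D"
  define Dj where "Dj = {w \<in> D. (w, j) \<in> (E \<inter> D \<times> D)\<^sup>*}"
  have "finite (in_boundary E W D)" using assms(1) unfolding in_boundary_def by simp
  then have "card (in_boundary E W Dj) \<le> card (in_boundary E W D)"
    unfolding Dj_def by (rule card_mono[OF _ in_boundary_ancestors])
  then have "\<not> Dj \<subset> D" using minimal[of Dj] \<open>j \<in> D\<close> assms(3) unfolding Dj_def by force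
  then have "Dj = D" unfolding Dj_def by blast
  then have "(i, j) \<in> (E \<inter> D \<times> D)\<^sup>*" using \<open>i \<in> D\<close> unfolding Dj_def by blast
  from rtrancl_imp_path[OF this] obtain p where p: "p \<noteq> []" "distinct p" "walk (E \<inter> D \<times> D) p"
      "hd p = i" "last p = j" "set p \<subseteq> insert i (Range (E \<inter> D \<times> D))"
    by blast
  have "walk E p" using walk_mono[OF p(3)] by simp
  then have "dpath E p i j" using p unfolding dpath_iff_walk by simp
  moreover have "set p \<subseteq> D" using p(6) \<open>i \<in> D\<close> by auto
  then have "set p \<inter> F = {}" using assms(2) by auto
  ultimately show "\<exists>p. dpath E p i j \<and> set p \<inter> F = {}" by blast
qed

lemma XY_path_excl_snoc:
  assumes "AB_path (E \<inter> W \<times> W) W X {u. (u, a) \<in> E} p" "a \<notin> W" "a \<notin> X" "a \<notin> Z" "W \<inter> Z = {}"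
  shows "XY_path_excl E X a Z (p @ [a])"
proof -
  have "walk E p" "p \<noteq> []" "(last p, a) \<in> E"
    using assms(1) walk_mono[of "E \<inter> W \<times> W" p E] unfolding AB_path_def by auto
  then have "walk E (p @ [a])" by (simp add: successively_append_iff)
  then have "dpath E (p @ [a]) (hd p) a"
    using assms(1,2) unfolding dpath_iff_walk AB_path_def by auto
  moreover have "hd p \<in> X" "set (p @ [a]) \<inter> Z = {}" using assms unfolding AB_path_def by auto
  ultimately show ?thesis using assms(3) unfolding XY_path_excl_def by blast
qed

lemma separator_if_not_reach:
  assumes "finite V" "a \<in> V - F" "a \<notin> B" "\<not> reach E f B {a} F"
  shows "\<exists>T. finite T \<and> card T \<le> f \<and>
    separates (E \<inter> (V - F - {a}) \<times> (V - F - {a})) (V - F - {a}) B {u. (u, a) \<in> E} T"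
proof (rule ccontr)
  define W where "W = V - F - {a}"
  assume "\<not> ?thesis"
  then have large: "f + 1 \<le> card T"
    if "finite T" "separates (E \<inter> W \<times> W) W B {u. (u, a) \<in> E} T" for T
    using that unfolding W_def by fastforce
  have "finite W" using assms(1) unfolding W_def by simp
  then obtain P where P: "card P = f + 1" "\<forall>p\<in>P. AB_path (E \<inter> W \<times> W) W B {u. (u, a) \<in> E} p"
      "disjoint_paths P"
    using menger[OF _ Int_lower2 large] by blast
  have "XY_path_excl E B a F q" if "q \<in> (\<lambda>p. p @ [a]) ` P" for q
    using that P(2) XY_path_excl_snoc[of E W B a _ F] assms(2,3) unfolding W_def by auto
  moreover have "set q \<inter> set q' = {a}"
    if qq: "q \<in> (\<lambda>p. p @ [a]) ` P" "q' \<in> (\<lambda>p. p @ [a]) ` P" "q \<noteq> q'" for q q'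
  proof -
    obtain p p' where "p \<in> P" "p' \<in> P" "q = p @ [a]" "q' = p' @ [a]" using qq(1,2) by blast
    moreover have "set p \<inter> set p' = {}"
      using P(3) calculation qq(3) unfolding disjoint_paths_def pairwise_def by blast
    ultimately show ?thesis by auto
  qed
  moreover have "card ((\<lambda>p. p @ [a]) ` P) = f + 1" using P(1) by (simp add: card_image inj_on_def)
  moreover have "finite ((\<lambda>p. p @ [a]) ` P)" using P(1) card.infinite by fastforce
  ultimately have "reach E f B {a} F" unfolding reach_def by (metis order_refl singletonD)
  then show False using assms(4) by simp
qed

lemma separator_blocks_rtrancl:
  assumes T: "separates (E \<inter> W \<times> W) W B {u. (u, a) \<in> E} T"
    and R: "R \<subseteq> insert a (W - T)" and "a \<notin> B" and u: "(u, a) \<in> (E \<inter> R \<times> R)\<^sup>*"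
  shows "u \<notin> B"
proof
  assume "u \<in> B"
  then have "u \<noteq> a" using \<open>a \<notin> B\<close> by blast
  have "u \<in> R" using u by (cases rule: converse_rtranclE) (use \<open>u \<noteq> a\<close> in auto)
  from rtrancl_imp_path[OF u] obtain p where p: "p \<noteq> []" "distinct p"
      "walk (E \<inter> R \<times> R) p" "hd p = u" "last p = a" "set p \<subseteq> insert u (Range (E \<inter> R \<times> R))"
    by blast
  define p' where "p' = butlast p"
  have p_split: "p = p' @ [a]" using p(1,5) unfolding p'_def by (metis append_butlast_last_id)
  then have "p' \<noteq> []" "hd p' = u" using p(4) \<open>u \<noteq> a\<close> by (cases p'; auto)+
  have "set p' \<subseteq> R - {a}" using p(2,6) \<open>u \<in> R\<close> p_split by auto
  then have W: "set p' \<subseteq> W" "set p' \<inter> T = {}" using R by auto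
  have "walk (E \<inter> R \<times> R) (p' @ [a])" using p(3) p_split by simp
  then have walk_R: "walk (E \<inter> R \<times> R) p'" and "(last p', a) \<in> E" using \<open>p' \<noteq> []\<close>
    by (auto simp: successively_append_iff)
  have "walk (E \<inter> W \<times> W) p'"
    by (rule successively_mono[OF walk_R]) (use W(1) in auto)
  then have "AB_path (E \<inter> W \<times> W) W B {u. (u, a) \<in> E} p'"
    using \<open>p' \<noteq> []\<close> \<open>hd p' = u\<close> \<open>u \<in> B\<close> \<open>(last p', a) \<in> E\<close> W(1) p(2) p_split
    unfolding AB_path_def by auto
  then show False using T W(2) unfolding separates_def by blast
qed

lemma in_boundary_ancestors_in_separator:
  assumes "a \<in> A" and AB: "A \<union> B = V - F" "A \<inter> B = {}"
    and T: "separates (E \<inter> (V - F - {a}) \<times> (V - F - {a})) (V - F - {a}) B {u. (u, a) \<in> E} T"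
  shows "\<exists>U. a \<in> U \<and> U \<subseteq> A \<and> in_boundary E (V - F) U \<subseteq> T"
proof -
  define R where "R = V - F - (T - {a})"
  define U where "U = {u. (u, a) \<in> (E \<inter> R \<times> R)\<^sup>*}"
  have "a \<in> R" using assms(1) AB unfolding R_def by auto
  have U_R: "U \<subseteq> R"
  proof
    fix u assume "u \<in> U"
    then have "(u, a) \<in> (E \<inter> R \<times> R)\<^sup>*" unfolding U_def by simp
    then show "u \<in> R" using \<open>a \<in> R\<close> by (cases rule: converse_rtranclE) auto
  qed
  have "R \<subseteq> insert a (V - F - {a} - T)" "a \<notin> B" using assms(1) AB(2) unfolding R_def by blast+
  then have "u \<notin> B" if "u \<in> U" for u
    using separator_blocks_rtrancl[OF T] that unfolding U_def by blast
  then have "U \<subseteq> A" using U_R AB(1) unfolding R_def by blast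
  moreover have "in_boundary E (V - F) U \<subseteq> T"
  proof
    fix x assume "x \<in> in_boundary E (V - F) U"
    then obtain u where x: "x \<in> V - F" "x \<notin> U" "u \<in> U" "(x, u) \<in> E" unfolding in_boundary_def by blast
    show "x \<in> T"
    proof (rule ccontr)
      assume "x \<notin> T"
      then have "(x, u) \<in> E \<inter> R \<times> R" using x U_R unfolding R_def by auto
      from converse_rtrancl_into_rtrancl[OF this] have "x \<in> U" using x(3) unfolding U_def by simp
      then show False using x(2) by simp
    qed
  qed
  moreover have "a \<in> U" unfolding U_def by simp
  ultimately show ?thesis by blast
qed

lemma small_in_boundary_subset_if_not_reach:
  assumes "finite V" "A \<union> B = V - F" "A \<inter> B = {}" "\<not> reach E f B A F"
  shows "\<exists>U. U \<noteq> {} \<and> U \<subseteq> A \<and> card (in_boundary E (V - F) U) \<le> f"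
proof -
  obtain a where a: "a \<in> A" "\<not> reach E f B {a} F"
    using assms(4) reach_iff_reach_singletons[of E f B A F] by blast
  then have "a \<in> V - F" "a \<notin> B" using assms(2,3) by auto
  then obtain T where T: "finite T" "card T \<le> f"
    "separates (E \<inter> (V - F - {a}) \<times> (V - F - {a})) (V - F - {a}) B {u. (u, a) \<in> E} T"
    using separator_if_not_reach[OF assms(1) _ _ a(2)] by blast
  obtain U where U: "a \<in> U" "U \<subseteq> A" "in_boundary E (V - F) U \<subseteq> T"
    using in_boundary_ancestors_in_separator[OF a(1) assms(2,3) T(3)] by blast
  have "card (in_boundary E (V - F) U) \<le> f" using card_mono[OF T(1) U(3)] T(2) by linarith
  then show ?thesis using U(1,2) by blast
qed

context
  fixes V :: "'a set" and E :: "('a \<times> 'a) set" and f :: nat and F :: "'a set"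
  assumes finV: "finite V" and EV: "E \<subseteq> V \<times> V" and FV: "F \<subseteq> V" and cardF: "card F \<le> f"
    and cond: "\<forall>X Y Z. X \<union> Y \<union> Z = V \<and> X \<inter> Y = {} \<and> X \<inter> Z = {} \<and> Y \<inter> Z = {}
                 \<and> X \<noteq> {} \<and> Y \<noteq> {} \<and> card Z \<le> f
                 \<longrightarrow> reach E f X Y Z \<or> reach E f Y X Z"
begin

lemma reach_from_small_in_boundary:
  assumes "D \<noteq> {}" "D \<subseteq> V - F" "card (in_boundary E (V - F) D) \<le> f"
  shows "reach E f D (V - F - D) F"
proof (cases "V - F - D = {}")
  case True
  then show ?thesis unfolding reach_def by simp
next
  case False
  have "D \<union> (V - F - D) \<union> F = V" using assms(2) FV by auto
  then have "reach E f D (V - F - D) F \<or> reach E f (V - F - D) D F"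
    using cond False assms(1,2) cardF by blast
  moreover obtain u where "u \<in> D" using assms(1) by blast
  then have "\<not> reach E f (V - F - D) D F"
    using reach_imp_card_in_boundary[OF finV EV, of f "V - F - D" D F u] assms(3) by auto
  ultimately show ?thesis by blast
qed

lemma exists_reach_strongly_conn_subset:
  assumes "U \<noteq> {}" "U \<subseteq> V - F" "card (in_boundary E (V - F) U) \<le> f"
  shows "\<exists>S. S \<noteq> {} \<and> S \<subseteq> U \<and> reach E f S (V - F - S) F \<and> strongly_conn_minus E F S"
proof -
  define Q where "Q D \<longleftrightarrow> D \<noteq> {} \<and> D \<subseteq> U \<and> card (in_boundary E (V - F) D) \<le> f" for D
  obtain D where D: "Q D" and least: "\<And>D'. Q D' \<Longrightarrow> card D \<le> card D'"
    using ex_has_least_nat[of Q U card] assms unfolding Q_def by blast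
  have D_sub: "D \<subseteq> V - F" using D assms(2) unfolding Q_def by blast
  have "finite D" using D_sub finV finite_subset by blast
  have "f < card (in_boundary E (V - F) D')" if "D' \<subset> D" "D' \<noteq> {}" for D'
  proof (rule ccontr)
    assume "\<not> ?thesis"
    then have "Q D'" using that D unfolding Q_def by auto
    then show False using least psubset_card_mono[OF \<open>finite D\<close> that(1)] by fastforce
  qed
  then have "strongly_conn_minus E F D"
    using strongly_conn_minus_if_minimal[of "V - F" D F E f] finV D D_sub unfolding Q_def by auto
  moreover have "reach E f D (V - F - D) F"
    using reach_from_small_in_boundary D D_sub unfolding Q_def by blast
  ultimately show ?thesis using D unfolding Q_def by blast
qed

lemma card_in_neighbours_of_excluded:
  assumes "0 < f" "V - F \<noteq> {}" "k \<in> F"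
  shows "f + 1 \<le> card {i \<in> V - F. (i, k) \<in> E}"
proof -
  have "card (F - {k}) \<le> f" using card_Diff1_le[of F k] cardF by linarith
  moreover have "{k} \<union> (V - F) \<union> (F - {k}) = V" using assms(3) FV by auto
  ultimately have "reach E f {k} (V - F) (F - {k}) \<or> reach E f (V - F) {k} (F - {k})"
    by (intro cond[rule_format]) (use assms(2,3) in auto)
  moreover obtain y where "y \<in> V - F" using assms(2) by blast
  then have "\<not> reach E f {k} (V - F) (F - {k})"
    using not_reach_from_singleton[OF assms(1), of y "V - F" k] assms(3) by simp
  ultimately have "reach E f (V - F) {k} (F - {k})" by simp
  then have "f + 1 \<le> card (in_boundary E (V - (F - {k})) {k})"
    by (rule reach_imp_card_in_boundary[OF finV EV _ singletonI]) (simp add: assms(3))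
  moreover have "in_boundary E (V - (F - {k})) {k} = {i \<in> V - F. (i, k) \<in> E}"
    using assms(3) unfolding in_boundary_def by blast
  ultimately show ?thesis by simp
qed

end

theorem claim1:
  fixes V :: "'a set" and E :: "('a \<times> 'a) set" and f :: nat and F A B :: "'a set"
  assumes finV: "finite V"
    and EV: "E \<subseteq> V \<times> V"
    and noloop: "\<forall>v. (v, v) \<notin> E"
    and cardV: "card V \<ge> 2"
    and fpos: "f > 0"
    and cond: "\<forall>X Y Z. X \<union> Y \<union> Z = V \<and> X \<inter> Y = {} \<and> X \<inter> Z = {} \<and> Y \<inter> Z = {}
                 \<and> X \<noteq> {} \<and> Y \<noteq> {} \<and> card Z \<le> f
                 \<longrightarrow> reach E f X Y Z \<or> reach E f Y X Z"
    and FV: "F \<subseteq> V" and cardF: "card F \<le> f"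
    and AB: "A \<union> B = V - F" and ABdisj: "A \<inter> B = {}"
    and Ane: "A \<noteq> {}" and Bne: "B \<noteq> {}"
    and AtoB: "reach E f A B F"
  shows "(\<not> reach E f B A F \<longrightarrow>
            (\<exists>S. S \<noteq> {} \<and> S \<subseteq> A \<and> reach E f S (V - F - S) F \<and> strongly_conn_minus E F S))
       \<and> (reach E f B A F \<longrightarrow>
            (\<exists>S. S \<noteq> {} \<and> S \<subseteq> A \<union> B \<and> reach E f S (V - F - S) F \<and> strongly_conn_minus E F S
                 \<and> reach E f A (S - A) F))
       \<and> (\<forall>k\<in>F. card {i \<in> V - F. (i, k) \<in> E} \<ge> f + 1)"
proof (intro conjI impI ballI)
  assume "\<not> reach E f B A F"
  from small_in_boundary_subset_if_not_reach[OF finV AB ABdisj this]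
  obtain U where U: "U \<noteq> {}" "U \<subseteq> A" "card (in_boundary E (V - F) U) \<le> f" by blast
  then have "U \<subseteq> V - F" using AB by blast
  then obtain S where "S \<noteq> {}" "S \<subseteq> U" "reach E f S (V - F - S) F" "strongly_conn_minus E F S"
    using exists_reach_strongly_conn_subset[OF finV EV FV cardF cond U(1) _ U(3)] by blast
  then show "\<exists>S. S \<noteq> {} \<and> S \<subseteq> A \<and> reach E f S (V - F - S) F \<and> strongly_conn_minus E F S"
    using U(2) by blast
next
  have "V - F \<noteq> {}" "card (in_boundary E (V - F) (V - F)) \<le> f"
    using AB Ane unfolding in_boundary_def by auto
  then obtain S where S: "S \<noteq> {}" "S \<subseteq> V - F" "reach E f S (V - F - S) F" "strongly_conn_minus E F S"
    using exists_reach_strongly_conn_subset[OF finV EV FV cardF cond, of "V - F"] by blast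
  moreover have "S - A \<subseteq> B" using S(2) AB by blast
  then have "reach E f A (S - A) F" by (rule reach_subset_target[OF AtoB])
  ultimately show "\<exists>S. S \<noteq> {} \<and> S \<subseteq> A \<union> B \<and> reach E f S (V - F - S) F \<and> strongly_conn_minus E F S
                 \<and> reach E f A (S - A) F" using AB by blast
next
  fix k assume "k \<in> F"
  moreover have "V - F \<noteq> {}" using AB Ane by blast
  ultimately show "f + 1 \<le> card {i \<in> V - F. (i, k) \<in> E}"
    using card_in_neighbours_of_excluded[OF finV EV FV cardF cond fpos] by blast
qed

end
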